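(* For any integer $m$ and $-\pi<\arg\zeta<\pi$, $$S_{-1,0}(\zeta\mathrm{e}^{-m\pi i})=S_{-1,0}(\zeta)+K''_+H^{(1)}_0(\zeta)+K''_-H^{(2)}_0(\zeta),\qquad K''_\pm=-\frac{m\pi^2(m\pm1)}{4}.$$
   Context: $J_0,Y_0$ are Bessel functions of order $0$, $H^{(1)}_0=J_0+iY_0$, $H^{(2)}_0=J_0-iY_0$, $\psi=\Gamma'/\Gamma$. The Lommel function $S_{-1,0}$ is defined by $S_{-1,0}(\zeta)=\frac12\sum_{k\ge0}\frac{(-1)^k(\zeta/2)^{2k}}{(k!)^2}\big\{[\log\frac{\zeta}{2}-\psi(k+1)]^2-\frac12\psi'(k+1)+\frac{\pi^2}{4}\big\}$. Right-hand side functions are on the principal branch $-\pi<\arg\zeta<\pi$; $g(\zeta\mathrm{e}^{-m\pi i})$ is the value of the analytic continuation of the principal branch at the point over $\zeta$ with argument $\arg\zeta-m\pi$. *)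

theory Defs
  imports "HOL-Analysis.Analysis"
begin

definition besselJ0 :: "complex \<Rightarrow> complex" where
  "besselJ0 z = (\<Sum>k. (-1)^k * (z/2)^(2*k) / (of_nat (fact k))^2)"

(* Functions with a logarithmic branch point are written in the logarithmic
   coordinate w (the point over zeta = exp w with arg zeta = Im w); this is the
   analytic continuation of the principal branch along the Riemann surface of log.
   log(zeta/2) on that sheet is  w - ln 2. *)

(* Y_0 (DLMF 10.8.2, n = 0):
   Y_0(z) = (2/pi) log(z/2) J_0(z) - (2/pi) sum_k psi(k+1) (-z^2/4)^k/(k!)^2 *)
definition besselY0_lc :: "complex \<Rightarrow> complex" where
  "besselY0_lc w = (2 / of_real pi) *
     ((w - of_real (ln 2)) * besselJ0 (exp w)
      - (\<Sum>k. of_real (Digamma (real (Suc k))) * (-1)^k * (exp w / 2)^(2*k)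
               / (of_nat (fact k))^2))"

definition besselY0 :: "complex \<Rightarrow> complex" where
  "besselY0 z = besselY0_lc (Ln z)"

definition hankel1_0 :: "complex \<Rightarrow> complex" where
  "hankel1_0 z = besselJ0 z + \<i> * besselY0 z"

definition hankel2_0 :: "complex \<Rightarrow> complex" where
  "hankel2_0 z = besselJ0 z - \<i> * besselY0 z"

definition lommelS_lc :: "complex \<Rightarrow> complex" where
  "lommelS_lc w = (1/2) * (\<Sum>k. (-1)^k * (exp w / 2)^(2*k) / (of_nat (fact k))^2 *
      ((w - of_real (ln 2) - of_real (Digamma (real (Suc k))))^2
       - of_real (Polygamma 1 (real (Suc k))) / 2 + of_real (pi^2) / 4))"

definition lommelS :: "complex \<Rightarrow> complex" where
  "lommelS z = lommelS_lc (Ln z)"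

end

theory Submission imports Defs begin

text \<open>
  All three functions are series in the terms of \<open>J\<^sub>0\<close>, which depend on \<open>\<zeta>\<close> only through
  \<open>\<zeta>\<^sup>2\<close> and are therefore unchanged when \<open>Ln \<zeta>\<close> is shifted by \<open>u = m\<pi>i\<close>. The shift only
  replaces \<open>log(\<zeta>/2)\<close> by \<open>log(\<zeta>/2) - u\<close> inside the square in \<open>S\<^sub>-\<^sub>1\<^sub>,\<^sub>0\<close>; expanding the
  square gives \<open>S\<^sub>-\<^sub>1\<^sub>,\<^sub>0 - (\<pi>u/2) Y\<^sub>0 + (u\<^sup>2/2) J\<^sub>0\<close>, and rewriting \<open>J\<^sub>0, Y\<^sub>0\<close> through the
  Hankel functions yields the constants \<open>K''\<^sub>\<plusminus>\<close>.
\<close>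

definition besselJ0_term :: "complex \<Rightarrow> nat \<Rightarrow> complex" where
  "besselJ0_term z k = (-1)^k * (z/2)^(2*k) / (of_nat (fact k))^2"

lemma besselJ0_eq_suminf: "besselJ0 z = (\<Sum>k. besselJ0_term z k)"
  unfolding besselJ0_def besselJ0_term_def ..

lemma besselY0_lc_eq_suminf:
  "besselY0_lc w = 2 / of_real pi * ((w - of_real (ln 2)) * (\<Sum>k. besselJ0_term (exp w) k)
     - (\<Sum>k. besselJ0_term (exp w) k * of_real (Digamma (real (Suc k)))))"
  unfolding besselY0_lc_def besselJ0_eq_suminf besselJ0_term_def by (simp add: algebra_simps)

lemma lommelS_lc_eq_suminf:
  "lommelS_lc w = (\<Sum>k. besselJ0_term (exp w) k *
     ((w - of_real (ln 2) - of_real (Digamma (real (Suc k))))^2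
      + (of_real (pi^2) / 4 - of_real (Polygamma 1 (real (Suc k))) / 2))) / 2"
  unfolding lommelS_lc_def besselJ0_term_def by (simp add: algebra_simps)

lemma besselJ0_term_exp_shift:
  fixes m :: int
  shows "besselJ0_term (exp (w - of_int m * of_real pi * \<i>)) k = besselJ0_term (exp w) k"
proof -
  define u where "u = of_int m * of_real pi * \<i>"
  have "exp (- u) ^ 2 = exp (- u + - u)"
    by (simp only: power2_eq_square exp_add)
  also have "- u + - u = complex_of_real (2 * real_of_int (- m) * pi) * \<i>"
    by (simp add: u_def)
  also have "exp \<dots> = 1"
    by (rule exp_integer_2pi) simp
  finally have "exp (w - u) ^ 2 = exp w ^ 2"
    by (simp only: diff_conv_add_uminus exp_add power_mult_distrib mult_1_right)
  then show ?thesis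
    unfolding besselJ0_term_def u_def[symmetric] by (simp add: power_mult power_divide)
qed

lemma summable_besselJ0_term_mult:
  assumes "\<And>k. norm (c k) \<le> C * B ^ k"
  shows "summable (\<lambda>k. besselJ0_term z k * c k)"
proof (rule summable_comparison_test)
  define r where "r = norm (z/2)^2"
  show "summable (\<lambda>k. \<bar>C\<bar> * ((r * \<bar>B\<bar>)^k /\<^sub>R fact k))"
    using exp_converges[of "r * \<bar>B\<bar>"] by (intro summable_mult) (simp add: sums_iff)
  show "\<exists>N. \<forall>k\<ge>N. norm (besselJ0_term z k * c k) \<le> \<bar>C\<bar> * ((r * \<bar>B\<bar>)^k /\<^sub>R fact k)"
  proof (intro exI allI impI)
    fix k :: nat
    have "norm (of_nat (fact k) :: complex) = fact k"
      by (metis norm_of_nat of_nat_fact)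
    then have "norm (besselJ0_term z k) = r^k / (fact k)^2"
      unfolding besselJ0_term_def r_def norm_mult norm_divide norm_power
      by (simp add: power_mult)
    also have "\<dots> \<le> r^k / fact k"
      by (intro divide_left_mono) (auto simp: r_def power2_eq_square)
    finally have term_bound: "norm (besselJ0_term z k) \<le> r^k / fact k" .
    have "C * B ^ k \<le> \<bar>C\<bar> * \<bar>B\<bar>^k"
      by (metis abs_ge_self abs_mult power_abs)
    then have coeff: "norm (c k) \<le> \<bar>C\<bar> * \<bar>B\<bar>^k"
      using assms[of k] by linarith
    have "norm (besselJ0_term z k * c k) \<le> r^k / fact k * (\<bar>C\<bar> * \<bar>B\<bar>^k)"
      unfolding norm_mult by (intro mult_mono term_bound coeff) (auto simp: r_def)
    also have "\<dots> = \<bar>C\<bar> * ((r * \<bar>B\<bar>)^k /\<^sub>R fact k)"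
      by (simp add: power_mult_distrib divide_inverse_commute)
    finally show "norm (besselJ0_term z k * c k) \<le> \<bar>C\<bar> * ((r * \<bar>B\<bar>)^k /\<^sub>R fact k)" .
  qed
qed

lemma abs_Digamma_Suc_le: "\<bar>Digamma (real (Suc k))\<bar> \<le> (1 + \<bar>euler_mascheroni\<bar>) * 2^k"
proof -
  have "harm k \<le> (\<Sum>j<k. 1 :: real)"
    unfolding harm_altdef by (intro sum_mono) (simp add: inverse_le_1_iff)
  then have "\<bar>harm k - euler_mascheroni\<bar> \<le> real k + \<bar>euler_mascheroni\<bar>"
    using harm_nonneg[of k, where 'a=real] by simp
  moreover have "real k + 1 \<le> 2^k"
    by (induction k) simp_all
  moreover have "\<bar>euler_mascheroni\<bar> \<le> \<bar>euler_mascheroni\<bar> * (2::real)^k"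
    using mult_left_mono[OF one_le_power[of "2::real" k]] by simp
  moreover have "Digamma (real (Suc k)) = harm k - euler_mascheroni"
    using Digamma_of_nat[where 'a=real, of k] by simp
  ultimately show ?thesis
    by (simp add: algebra_simps)
qed

lemma Polygamma_one_Suc_bounds:
  "0 < Polygamma 1 (real (Suc k)) \<and> Polygamma 1 (real (Suc k)) \<le> Polygamma 1 1"
proof
  show "0 < Polygamma 1 (real (Suc k))"
    by (rule Polygamma_real_odd_pos) (auto elim!: nonpos_Ints_cases)
  show "Polygamma 1 (real (Suc k)) \<le> Polygamma 1 1"
  proof (cases k)
    case (Suc j)
    then show ?thesis
      using Polygamma_real_strict_antimono[of 1 "real (Suc k)" 1] by simp
  qed simp
qed
lemma summable_besselJ0_term_Digamma_power:
  "summable (\<lambda>k. besselJ0_term z k * complex_of_real (Digamma (real (Suc k))) ^ n)"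
proof (rule summable_besselJ0_term_mult)
  fix k
  have "norm (complex_of_real (Digamma (real (Suc k))) ^ n) \<le> ((1 + \<bar>euler_mascheroni\<bar>) * 2^k) ^ n"
    unfolding norm_power norm_of_real by (rule power_mono[OF abs_Digamma_Suc_le]) simp
  also have "\<dots> = (1 + \<bar>euler_mascheroni\<bar>) ^ n * (2 ^ n) ^ k"
    by (simp add: power_mult_distrib mult.commute flip: power_mult)
  finally show "norm (complex_of_real (Digamma (real (Suc k))) ^ n) \<le> (1 + \<bar>euler_mascheroni\<bar>) ^ n * (2 ^ n) ^ k" .
qed

lemma summable_besselJ0_term_Polygamma:
  "summable (\<lambda>k. besselJ0_term z k * complex_of_real (Polygamma 1 (real (Suc k))))"
proof (rule summable_besselJ0_term_mult)
  show "norm (complex_of_real (Polygamma 1 (real (Suc k)))) \<le> Polygamma 1 1 * 1 ^ k" for k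
    using Polygamma_one_Suc_bounds[of k] by simp
qed

lemma summable_besselJ0_term_lommel:
  "summable (\<lambda>k. besselJ0_term z k * ((x - complex_of_real (Digamma (real (Suc k))))^2
                     + (c - complex_of_real (Polygamma 1 (real (Suc k))) / 2)))"
proof -
  let ?a = "besselJ0_term z" and ?\<psi> = "\<lambda>k. complex_of_real (Digamma (real (Suc k)))"
    and ?P = "\<lambda>k. complex_of_real (Polygamma 1 (real (Suc k)))"
  have "summable (\<lambda>k. (x^2 + c) * (?a k * ?\<psi> k ^ 0) - 2 * x * (?a k * ?\<psi> k ^ 1)
                       + ?a k * ?\<psi> k ^ 2 - (?a k * ?P k) / 2)"
    by (intro summable_add summable_diff summable_mult summable_divide
        summable_besselJ0_term_Digamma_power summable_besselJ0_term_Polygamma)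
  then show ?thesis
    by (simp add: power2_eq_square algebra_simps)
qed

lemma suminf_shift_square:
  fixes a b d :: "nat \<Rightarrow> 'a :: {real_normed_field, banach}"
  assumes "summable a" "summable (\<lambda>k. a k * b k)"
    and "summable (\<lambda>k. a k * ((x - b k)^2 + d k))"
  shows "(\<Sum>k. a k * ((x - u - b k)^2 + d k)) =
           (\<Sum>k. a k * ((x - b k)^2 + d k))
           - 2 * u * (x * (\<Sum>k. a k) - (\<Sum>k. a k * b k)) + u^2 * (\<Sum>k. a k)"
proof -
  have "a k * ((x - u - b k)^2 + d k) =
          a k * ((x - b k)^2 + d k) - (2 * u * x - u^2) * a k + 2 * u * (a k * b k)" for k
    by (simp add: power2_eq_square algebra_simps)
  then have "(\<lambda>k. a k * ((x - u - b k)^2 + d k)) sums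
      ((\<Sum>k. a k * ((x - b k)^2 + d k)) - (2 * u * x - u^2) * (\<Sum>k. a k) + 2 * u * (\<Sum>k. a k * b k))"
    using assms by (simp only:) (intro sums_add sums_diff sums_mult summable_sums)
  then show ?thesis
    by (simp add: sums_iff algebra_simps)
qed

theorem lemma3p7:
  fixes m :: int and \<zeta> :: complex
  assumes "\<zeta> \<noteq> 0" and "- pi < Arg \<zeta>" and "Arg \<zeta> < pi"
  shows "lommelS_lc (Ln \<zeta> - of_int m * of_real pi * \<i>) =
           lommelS \<zeta>
           + (- (of_int m * of_real (pi^2) * (of_int m + 1)) / 4) * hankel1_0 \<zeta>
           + (- (of_int m * of_real (pi^2) * (of_int m - 1)) / 4) * hankel2_0 \<zeta>"
proof -
  define a where "a = besselJ0_term \<zeta>"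
  define L where "L = Ln \<zeta> - of_real (ln 2)"
  define u where "u = of_int m * of_real pi * \<i>"
  define \<psi> where "\<psi> k = complex_of_real (Digamma (real (Suc k)))" for k
  define \<delta> where "\<delta> k = complex_of_real (pi^2) / 4 - of_real (Polygamma 1 (real (Suc k))) / 2" for k
  have exp_Ln: "exp (Ln \<zeta>) = \<zeta>" using assms(1) by simp
  have lhs: "lommelS_lc (Ln \<zeta> - u) = (\<Sum>k. a k * ((L - u - \<psi> k)^2 + \<delta> k)) / 2"
    using lommelS_lc_eq_suminf[of "Ln \<zeta> - u"] besselJ0_term_exp_shift[of "Ln \<zeta>" m]
    by (simp add: exp_Ln a_def L_def u_def \<psi>_def \<delta>_def algebra_simps)
  have S: "lommelS \<zeta> = (\<Sum>k. a k * ((L - \<psi> k)^2 + \<delta> k)) / 2"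
    unfolding lommelS_def lommelS_lc_eq_suminf exp_Ln a_def L_def \<psi>_def \<delta>_def ..
  have J: "besselJ0 \<zeta> = (\<Sum>k. a k)"
    unfolding besselJ0_eq_suminf a_def ..
  have Y: "besselY0 \<zeta> = 2 / of_real pi * (L * (\<Sum>k. a k) - (\<Sum>k. a k * \<psi> k))"
    unfolding besselY0_def besselY0_lc_eq_suminf exp_Ln a_def L_def \<psi>_def ..
  have "summable a" "summable (\<lambda>k. a k * \<psi> k)"
    using summable_besselJ0_term_Digamma_power[of \<zeta> 0] summable_besselJ0_term_Digamma_power[of \<zeta> 1]
    by (simp_all add: a_def \<psi>_def)
  moreover have "summable (\<lambda>k. a k * ((L - \<psi> k)^2 + \<delta> k))"
    using summable_besselJ0_term_lommel[of \<zeta> L "complex_of_real (pi^2) / 4"]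
    by (simp add: a_def \<psi>_def \<delta>_def diff_add_eq add_diff_eq)
  ultimately have shift: "(\<Sum>k. a k * ((L - u - \<psi> k)^2 + \<delta> k)) =
      (\<Sum>k. a k * ((L - \<psi> k)^2 + \<delta> k)) - 2 * u * (L * (\<Sum>k. a k) - (\<Sum>k. a k * \<psi> k))
      + u^2 * (\<Sum>k. a k)"
    by (rule suminf_shift_square)
  show ?thesis
    unfolding u_def[symmetric] lhs shift S hankel1_0_def hankel2_0_def Y J
    by (simp add: u_def field_simps power2_eq_square)
qed

end
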